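(* Let $G$ be a graph with no induced $P_7$, $C_4$, $C_6$ or $C_7$, let $H=(B_1,\dots,B_5)$ be a nice blowup of $C_5$ in $G$, let $i\in\{1,\dots,5\}$, and let $K$ be a connected subgraph of $G[A_2(i)]$. If two vertices $u,v\in N(K)\cap A'_3(i+1)$ are non-adjacent, then $u$ and $v$ have a common neighbor in $K$.
   Context: Indices modulo $5$. A nice blowup of $C_5$ is a tuple $(B_1,\dots,B_5)$ of pairwise disjoint cliques such that every vertex of $B_j$ has a neighbor in $B_{j-1}$ and in $B_{j+1}$, $B_j$ is anticomplete to $B_{j+2}$, and there are no $a\in B_j$, distinct $b,c\in B_{j+1}$, $d\in B_{j+2}$ with $G[\{a,b,c,d\}]\cong P_4$; $V(H)=\bigcup B_j$. For $v\notin V(H)$, $\operatorname{supp}(v)$ is the set of $j$ such that $v$ has a neighbor in $B_j$. $A_2(i)=\{v\notin V(H):\operatorname{supp}(v)=\{i,i+1\}\}$, $A_3(j)=\{v\notin V(H):\operatorname{supp}(v)=\{j-1,j,j+1\}\}$, and $A'_3(j)=A_3(j)\cup B_j$. $N(K)$ is the set of vertices outside $K$ with a neighbor in $K$. *)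

theory Defs
  imports Main
begin

definition graph :: "'a set \<Rightarrow> ('a \<Rightarrow> 'a \<Rightarrow> bool) \<Rightarrow> bool" where
  "graph V E \<longleftrightarrow> finite V \<and> (\<forall>x y. E x y \<longrightarrow> x \<in> V \<and> y \<in> V)
     \<and> (\<forall>x y. E x y \<longrightarrow> E y x) \<and> (\<forall>x. \<not> E x x)"

definition induced_path :: "('a \<Rightarrow> 'a \<Rightarrow> bool) \<Rightarrow> (nat \<Rightarrow> 'a) \<Rightarrow> nat \<Rightarrow> bool" where
  "induced_path E f n \<longleftrightarrow> inj_on f {..<n} \<and>
     (\<forall>i<n. \<forall>j<n. E (f i) (f j) \<longleftrightarrow> (i + 1 = j \<or> j + 1 = i))"

definition induced_cycle :: "('a \<Rightarrow> 'a \<Rightarrow> bool) \<Rightarrow> (nat \<Rightarrow> 'a) \<Rightarrow> nat \<Rightarrow> bool" where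
  "induced_cycle E f n \<longleftrightarrow> inj_on f {..<n} \<and>
     (\<forall>i<n. \<forall>j<n. E (f i) (f j) \<longleftrightarrow> (j = (i + 1) mod n \<or> i = (j + 1) mod n))"

definition has_induced_P :: "'a set \<Rightarrow> ('a \<Rightarrow> 'a \<Rightarrow> bool) \<Rightarrow> nat \<Rightarrow> bool" where
  "has_induced_P V E n \<longleftrightarrow> (\<exists>f. f ` {..<n} \<subseteq> V \<and> induced_path E f n)"

definition has_induced_C :: "'a set \<Rightarrow> ('a \<Rightarrow> 'a \<Rightarrow> bool) \<Rightarrow> nat \<Rightarrow> bool" where
  "has_induced_C V E n \<longleftrightarrow> (\<exists>f. f ` {..<n} \<subseteq> V \<and> induced_cycle E f n)"

definition induces_P4 :: "('a \<Rightarrow> 'a \<Rightarrow> bool) \<Rightarrow> 'a set \<Rightarrow> bool" where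
  "induces_P4 E S \<longleftrightarrow> (\<exists>f. f ` {..<4} = S \<and> induced_path E f 4)"

definition is_clique :: "('a \<Rightarrow> 'a \<Rightarrow> bool) \<Rightarrow> 'a set \<Rightarrow> bool" where
  "is_clique E S \<longleftrightarrow> (\<forall>x\<in>S. \<forall>y\<in>S. x \<noteq> y \<longrightarrow> E x y)"

definition anticomplete :: "('a \<Rightarrow> 'a \<Rightarrow> bool) \<Rightarrow> 'a set \<Rightarrow> 'a set \<Rightarrow> bool" where
  "anticomplete E X Y \<longleftrightarrow> (\<forall>x\<in>X. \<forall>y\<in>Y. \<not> E x y)"

text \<open>Nice blowup of C_5, with the blobs indexed by 0..4 (indices mod 5).\<close>
definition nice_blowup_C5 :: "'a set \<Rightarrow> ('a \<Rightarrow> 'a \<Rightarrow> bool) \<Rightarrow> (nat \<Rightarrow> 'a set) \<Rightarrow> bool" where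
  "nice_blowup_C5 V E B \<longleftrightarrow>
     (\<forall>j<5. B j \<subseteq> V) \<and>
     (\<forall>j<5. \<forall>k<5. j \<noteq> k \<longrightarrow> B j \<inter> B k = {}) \<and>
     (\<forall>j<5. is_clique E (B j)) \<and>
     (\<forall>j<5. \<forall>x\<in>B j. (\<exists>y\<in>B ((j + 4) mod 5). E x y) \<and> (\<exists>y\<in>B ((j + 1) mod 5). E x y)) \<and>
     (\<forall>j<5. anticomplete E (B j) (B ((j + 2) mod 5))) \<and>
     (\<forall>j<5. \<not> (\<exists>a b c d. a \<in> B j \<and> b \<in> B ((j + 1) mod 5) \<and> c \<in> B ((j + 1) mod 5) \<and> b \<noteq> c
                 \<and> d \<in> B ((j + 2) mod 5) \<and> induces_P4 E {a, b, c, d}))"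

definition VH :: "(nat \<Rightarrow> 'a set) \<Rightarrow> 'a set" where
  "VH B = (\<Union>j<5. B j)"

definition supp :: "('a \<Rightarrow> 'a \<Rightarrow> bool) \<Rightarrow> (nat \<Rightarrow> 'a set) \<Rightarrow> 'a \<Rightarrow> nat set" where
  "supp E B v = {j. j < 5 \<and> (\<exists>u\<in>B j. E v u)}"

definition A2 :: "'a set \<Rightarrow> ('a \<Rightarrow> 'a \<Rightarrow> bool) \<Rightarrow> (nat \<Rightarrow> 'a set) \<Rightarrow> nat \<Rightarrow> 'a set" where
  "A2 V E B i = {v \<in> V. v \<notin> VH B \<and> supp E B v = {i, (i + 1) mod 5}}"

definition A3 :: "'a set \<Rightarrow> ('a \<Rightarrow> 'a \<Rightarrow> bool) \<Rightarrow> (nat \<Rightarrow> 'a set) \<Rightarrow> nat \<Rightarrow> 'a set" where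
  "A3 V E B j = {v \<in> V. v \<notin> VH B \<and> supp E B v = {(j + 4) mod 5, j, (j + 1) mod 5}}"

definition A3' :: "'a set \<Rightarrow> ('a \<Rightarrow> 'a \<Rightarrow> bool) \<Rightarrow> (nat \<Rightarrow> 'a set) \<Rightarrow> nat \<Rightarrow> 'a set" where
  "A3' V E B j = A3 V E B j \<union> B j"

definition nbhd :: "'a set \<Rightarrow> ('a \<Rightarrow> 'a \<Rightarrow> bool) \<Rightarrow> 'a set \<Rightarrow> 'a set" where
  "nbhd V E K = {v \<in> V. v \<notin> K \<and> (\<exists>u\<in>K. E v u)}"

definition connected_set :: "('a \<Rightarrow> 'a \<Rightarrow> bool) \<Rightarrow> 'a set \<Rightarrow> bool" where
  "connected_set E K \<longleftrightarrow> K \<noteq> {} \<and>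
     (\<forall>x\<in>K. \<forall>y\<in>K. (\<lambda>a b. a \<in> K \<and> b \<in> K \<and> E a b)\<^sup>*\<^sup>* x y)"

end

theory Submission
  imports Defs
begin

(*
  Suppose u and v have no common neighbour in K. A shortest path from u to v through the connected
  set K is an induced path u - k_1 - ... - k_n - v with every k_j in A_2(i); then n >= 2, and n <= 4
  because there is no induced P_7. The k_j have no neighbours in B_{i+2}, B_{i+3}, B_{i+4}, whereas
  u and v have neighbours in B_{i+2} but none in B_{i+3}, B_{i+4}.

  If u and v have private neighbours a and b in the clique B_{i+2}, the induced path
  a - u - k_1 - ... - k_n - v - b is closed by the edge ab, giving an induced C_6, C_7 or P_7.
  If they have a common neighbour c in B_{i+2}, then c closes a hole of length n + 3, so n = 2.
  Walking on from c through d, e, x in B_{i+3}, B_{i+4}, B_i, the induced path e - d - c - u - k_1 - k_2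
  forces x to see u (otherwise it extends to an induced P_7, C_6 or C_7), and symmetrically v;
  but then x - u - c - v is an induced C_4.
*)

definition induced_path_list :: "('a \<Rightarrow> 'a \<Rightarrow> bool) \<Rightarrow> 'a list \<Rightarrow> bool" where
  "induced_path_list E xs \<longleftrightarrow> induced_path E ((!) xs) (length xs)"

lemma induced_path_list_iff:
  "induced_path_list E xs \<longleftrightarrow> distinct xs \<and>
     (\<forall>p<length xs. \<forall>q<length xs. E (xs ! p) (xs ! q) \<longleftrightarrow> p + 1 = q \<or> q + 1 = p)"
  unfolding induced_path_list_def induced_path_def distinct_conv_nth inj_on_def by auto

lemma induced_path_list_take:
  "induced_path_list E xs \<Longrightarrow> induced_path_list E (take n xs)"
  unfolding induced_path_list_iff by simp

lemma induced_path_list_revI: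
  assumes "induced_path_list E xs"
  shows "induced_path_list E (rev xs)"
  unfolding induced_path_list_iff
proof (intro conjI allI impI)
  show "distinct (rev xs)" using assms by (simp add: induced_path_list_iff)
  fix p q assume "p < length (rev xs)" "q < length (rev xs)"
  then show "E (rev xs ! p) (rev xs ! q) \<longleftrightarrow> p + 1 = q \<or> q + 1 = p"
    using assms unfolding induced_path_list_iff
    by (auto simp: rev_nth dest!: spec[of _ "length xs - Suc p"] spec[of _ "length xs - Suc q"])
qed

lemma induced_path_list_rev [simp]:
  "induced_path_list E (rev xs) \<longleftrightarrow> induced_path_list E xs"
  using induced_path_list_revI[of E "rev xs"] induced_path_list_revI[of E xs] by auto

lemma induced_path_list_Cons:
  assumes "irreflp E" "symp E"
  shows "induced_path_list E (x # xs) \<longleftrightarrow>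
    induced_path_list E xs \<and> x \<notin> set xs \<and> (\<forall>y\<in>set xs. E x y \<longleftrightarrow> y = hd xs)"
proof -
  have hd: "(\<forall>y\<in>set xs. E x y \<longleftrightarrow> y = hd xs) \<longleftrightarrow> (\<forall>q<length xs. E x (xs ! q) \<longleftrightarrow> q = 0)"
    if "distinct xs"
  proof -
    have "xs ! q = hd xs \<longleftrightarrow> q = 0" if "q < length xs" for q
      using that \<open>distinct xs\<close> nth_eq_iff_index_eq[of xs q 0] by (cases xs) auto
    then show ?thesis by (auto simp: all_set_conv_all_nth)
  qed
  have "(\<forall>p<Suc (length xs). \<forall>q<Suc (length xs).
          E ((x # xs) ! p) ((x # xs) ! q) \<longleftrightarrow> p + 1 = q \<or> q + 1 = p) \<longleftrightarrow>
        (\<forall>q<length xs. E x (xs ! q) \<longleftrightarrow> q = 0) \<and>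
        (\<forall>p<length xs. \<forall>q<length xs. E (xs ! p) (xs ! q) \<longleftrightarrow> p + 1 = q \<or> q + 1 = p)"
    using assms unfolding irreflp_def symp_def by (auto simp: All_less_Suc2)
  then show ?thesis
    using hd unfolding induced_path_list_iff by auto
qed

lemma induced_path_list_snoc:
  assumes "irreflp E" "symp E"
  shows "induced_path_list E (xs @ [x]) \<longleftrightarrow>
    induced_path_list E xs \<and> x \<notin> set xs \<and> (\<forall>y\<in>set xs. E y x \<longleftrightarrow> y = last xs)"
  using induced_path_list_Cons[OF assms, of x "rev xs"] induced_path_list_rev[of E "xs @ [x]"]
    assms(2) by (auto simp: hd_rev symp_def)

lemma induced_path_list_take_snoc_first_neighbour:
  assumes "irreflp E" "symp E" and "induced_path_list E ys" "x \<notin> set ys"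
    and "j < length ys" "E (ys ! j) x" "\<forall>q<j. \<not> E (ys ! q) x"
  shows "induced_path_list E (take (Suc j) ys @ [x])"
proof -
  have "distinct ys" using assms(3) by (simp add: induced_path_list_iff)
  have "E y x \<longleftrightarrow> y = ys ! j" if y: "y \<in> set (take (Suc j) ys)" for y
  proof -
    obtain q where "q \<le> j" "y = ys ! q"
      using y assms(5) by (auto simp: in_set_conv_nth less_Suc_eq_le)
    then show ?thesis
      using assms(5-7) \<open>distinct ys\<close> nth_eq_iff_index_eq[of ys q j] by (cases "q = j") auto
  qed
  moreover have "last (take (Suc j) ys) = ys ! j"
    using assms(5) by (simp add: take_Suc_conv_app_nth)
  ultimately show ?thesis
    using assms(3-5) induced_path_list_take[OF assms(3)]
    by (auto simp: induced_path_list_snoc[OF assms(1,2)] dest: in_set_takeD)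
qed

lemma has_induced_P_of_induced_path_list:
  assumes "induced_path_list E ys" "set ys \<subseteq> V" "n \<le> length ys"
  shows "has_induced_P V E n"
  unfolding has_induced_P_def
proof (intro exI conjI)
  show "(!) ys ` {..<n} \<subseteq> V" using assms(2,3) by (auto dest: nth_mem)
  show "induced_path E ((!) ys) n"
    using assms(1,3) unfolding induced_path_list_def induced_path_def
    by (auto intro: inj_on_subset)
qed

lemma has_induced_C_by_closing_path:
  assumes "irreflp E" "symp E" and "induced_path_list E ys" "ys \<noteq> []" "z \<notin> set ys"
    and "set (z # ys) \<subseteq> V" and "\<forall>y\<in>set ys. E z y \<longleftrightarrow> y = hd ys \<or> y = last ys"
  shows "has_induced_C V E (Suc (length ys))"
  unfolding has_induced_C_def
proof (intro exI conjI)
  let ?m = "length ys"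
  have ys: "distinct ys" "\<forall>p<?m. \<forall>q<?m. E (ys ! p) (ys ! q) \<longleftrightarrow> p + 1 = q \<or> q + 1 = p"
    using assms(3) by (auto simp: induced_path_list_iff)
  have z: "E z (ys ! q) \<longleftrightarrow> q = 0 \<or> q + 1 = ?m" if "q < ?m" for q
    using that assms(4,7) ys(1) nth_eq_iff_index_eq[of ys q 0] nth_eq_iff_index_eq[of ys q "?m - 1"]
    by (auto simp: hd_conv_nth last_conv_nth)
  show "(!) (ys @ [z]) ` {..<Suc ?m} \<subseteq> V"
    using assms(6) by (auto simp: nth_append dest: nth_mem)
  show "induced_cycle E ((!) (ys @ [z])) (Suc ?m)"
    unfolding induced_cycle_def
  proof (intro conjI allI impI)
    show "inj_on ((!) (ys @ [z])) {..<Suc ?m}"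
      using ys(1) assms(5) by (intro inj_on_nth) auto
    fix p q assume "p < Suc ?m" "q < Suc ?m"
    then consider "p < ?m" "q < ?m" | "p = ?m" "q < ?m" | "p < ?m" "q = ?m" | "p = ?m" "q = ?m"
      by linarith
    then show "E ((ys @ [z]) ! p) ((ys @ [z]) ! q) \<longleftrightarrow>
        q = (p + 1) mod Suc ?m \<or> p = (q + 1) mod Suc ?m"
    proof cases
      case 1 then show ?thesis using ys(2) by (auto simp: nth_append)
    next
      case 2 then show ?thesis using z by (auto simp: nth_append)
    next
      case 3
      have "E (ys ! p) z \<longleftrightarrow> E z (ys ! p)" using assms(2) by (auto simp: symp_def)
      then show ?thesis using 3 z[of p] by (auto simp: nth_append)
    next
      case 4 then show ?thesis using assms(1,4) by (simp add: irreflp_def)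
    qed
  qed
qed

lemma induced_path_list_Cons_or_hole:
  assumes "irreflp E" "symp E" and "induced_path_list E ys" "ys \<noteq> []" "x \<notin> set ys"
    and "set (x # ys) \<subseteq> V" "E x (hd ys)" "\<forall>q. 0 < q \<longrightarrow> q < m \<longrightarrow> \<not> E x (ys ! q)"
  shows "induced_path_list E (x # ys) \<or> (\<exists>j. m \<le> j \<and> j < length ys \<and> has_induced_C V E (j + 2))"
proof (cases "\<exists>j. 0 < j \<and> j < length ys \<and> E x (ys ! j)")
  case True
  then obtain j where j: "0 < j" "j < length ys" "E x (ys ! j)"
    and least: "\<forall>q<j. \<not> (0 < q \<and> q < length ys \<and> E x (ys ! q))"
    by (auto simp: exists_least_iff[of "\<lambda>j. 0 < j \<and> j < length ys \<and> E x (ys ! j)"])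
  have "m \<le> j" using j assms(8) by (meson not_le)
  have "distinct ys" using assms(3) by (simp add: induced_path_list_iff)
  have "E x y \<longleftrightarrow> y = hd (take (Suc j) ys) \<or> y = last (take (Suc j) ys)"
    if y: "y \<in> set (take (Suc j) ys)" for y
  proof -
    obtain q where "q \<le> j" "y = ys ! q"
      using y j(2) by (auto simp: in_set_conv_nth less_Suc_eq_le)
    moreover have "hd (take (Suc j) ys) = ys ! 0"
      using j(2) by (cases ys) auto
    moreover have "last (take (Suc j) ys) = ys ! j"
      using j(2) by (simp add: take_Suc_conv_app_nth)
    moreover have "ys ! q = ys ! 0 \<longleftrightarrow> q = 0" "ys ! q = ys ! j \<longleftrightarrow> q = j"
      using \<open>q \<le> j\<close> j(2) assms(4) nth_eq_iff_index_eq[OF \<open>distinct ys\<close>, of q 0]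
        nth_eq_iff_index_eq[OF \<open>distinct ys\<close>, of q j] by auto
    moreover have "\<not> E x (ys ! q)" if "0 < q" "q < j"
      using least that j(2) by auto
    ultimately show ?thesis
      using j(3) assms(4,7) \<open>q \<le> j\<close> by (auto simp: hd_conv_nth)
  qed
  then have "has_induced_C V E (Suc (length (take (Suc j) ys)))"
    using assms(4-6) j(2)
    by (intro has_induced_C_by_closing_path[OF assms(1,2) induced_path_list_take[OF assms(3)]])
      (auto dest: in_set_takeD)
  then show ?thesis using \<open>m \<le> j\<close> j(2) by auto
next
  case False
  have "distinct ys" using assms(3) by (simp add: induced_path_list_iff)
  have "E x y \<longleftrightarrow> y = hd ys" if y: "y \<in> set ys" for y
  proof -
    obtain q where "q < length ys" "y = ys ! q"
      using y by (auto simp: in_set_conv_nth)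
    then show ?thesis
      using False assms(4,7) \<open>distinct ys\<close> nth_eq_iff_index_eq[of ys q 0]
      by (cases "q = 0") (auto simp: hd_conv_nth)
  qed
  then show ?thesis
    using assms(3,5) by (simp add: induced_path_list_Cons[OF assms(1,2)])
qed

lemma induced_path_list_from_reachable:
  assumes "irreflp E" "symp E"
    and "(\<lambda>a b. a \<in> K \<and> b \<in> K \<and> E a b)\<^sup>*\<^sup>* k w" "k \<in> K" "E u k" "u \<notin> K"
  shows "\<exists>ks. set ks \<subseteq> K \<and> last (u # ks) = w \<and> induced_path_list E (u # ks)"
  using assms(3)
proof (induction rule: rtranclp_induct)
  case base
  have "induced_path_list E [k]"
    using assms(1) by (simp add: induced_path_list_iff irreflp_def)
  then have "induced_path_list E [u, k]"
    using assms(4-6) by (auto simp: induced_path_list_Cons[OF assms(1,2)])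
  then show ?case using assms(4) by (intro exI[of _ "[k]"]) auto
next
  case (step w z)
  then obtain ks where ks: "set ks \<subseteq> K" "last (u # ks) = w" "induced_path_list E (u # ks)"
    by blast
  show ?case
  proof (cases "z \<in> set (u # ks)")
    case True
    then obtain q where q: "q < length ks" "ks ! q = z"
      using step(2) assms(6) by (auto simp: in_set_conv_nth)
    have "last (u # take (Suc q) ks) = z"
      using q by (simp add: take_Suc_conv_app_nth)
    moreover have "induced_path_list E (u # take (Suc q) ks)"
      using induced_path_list_take[OF ks(3), of "Suc (Suc q)"] by simp
    ultimately show ?thesis
      using ks(1) set_take_subset[of "Suc q" ks] by (intro exI[of _ "take (Suc q) ks"]) auto
  next
    case False
    have "(u # ks) ! length ks = w"
      using ks(2) last_conv_nth[of "u # ks"] by simp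
    then have "\<exists>j. j < length (u # ks) \<and> E ((u # ks) ! j) z"
      using step(2) by (intro exI[of _ "length ks"]) simp
    then obtain j where "j < length (u # ks)" "E ((u # ks) ! j) z"
      and "\<forall>q<j. \<not> (q < length (u # ks) \<and> E ((u # ks) ! q) z)"
      unfolding exists_least_iff[of "\<lambda>j. j < length (u # ks) \<and> E ((u # ks) ! j) z"] by blast
    then have j: "j < length (u # ks)" "E ((u # ks) ! j) z" "\<forall>q<j. \<not> E ((u # ks) ! q) z"
      by auto
    have "induced_path_list E (u # take j ks @ [z])"
      using induced_path_list_take_snoc_first_neighbour[OF assms(1,2) ks(3) False j] by simp
    moreover have "set (take j ks @ [z]) \<subseteq> K"
      using ks(1) step(2) by (auto dest: in_set_takeD)
    ultimately show ?thesis by (intro exI[of _ "take j ks @ [z]"]) auto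
  qed
qed

lemma induced_path_list_through_connected:
  assumes "irreflp E" "symp E"
    and "(\<lambda>a b. a \<in> K \<and> b \<in> K \<and> E a b)\<^sup>*\<^sup>* k k'" "k \<in> K" "k' \<in> K"
    and "E u k" "E v k'" "u \<notin> K" "v \<notin> K" "u \<noteq> v" "\<not> E u v"
  shows "\<exists>ks. ks \<noteq> [] \<and> set ks \<subseteq> K \<and> induced_path_list E (u # ks @ [v])"
proof -
  \<comment> \<open>Reach v within K + v; an induced path cannot revisit v, so its interior lies in K.\<close>
  let ?K' = "insert v K"
  have "(\<lambda>a b. a \<in> ?K' \<and> b \<in> ?K' \<and> E a b)\<^sup>*\<^sup>* k k'"
    using assms(3) by (rule rtranclp_mono[THEN predicate2D, rotated]) auto
  moreover have "E k' v" using assms(2,7) by (rule sympD)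
  ultimately have "(\<lambda>a b. a \<in> ?K' \<and> b \<in> ?K' \<and> E a b)\<^sup>*\<^sup>* k v"
    using assms(5) by (simp add: rtranclp.rtrancl_into_rtrancl)
  moreover have "k \<in> ?K'" "u \<notin> ?K'" using assms(4,8,10) by auto
  ultimately obtain ks'
    where ks': "set ks' \<subseteq> ?K'" "last (u # ks') = v" "induced_path_list E (u # ks')"
    using induced_path_list_from_reachable[OF assms(1,2) _ _ assms(6)] by blast
  then obtain ks where ks: "ks' = ks @ [v]"
    using assms(10) by (cases ks' rule: rev_cases) auto
  have "v \<notin> set ks" using ks'(3) by (simp add: ks induced_path_list_iff)
  moreover have "ks \<noteq> []"
    using ks'(3) assms(11) by (auto simp: ks induced_path_list_Cons[OF assms(1,2)])
  ultimately show ?thesis using ks' ks by auto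
qed

(* Blob indices are written as j mod 5 for an arbitrary j, so that the lemmas apply verbatim to
   shifted indices such as i + 3. *)
locale C5_blowup =
  fixes V :: "'a set" and E :: "'a \<Rightarrow> 'a \<Rightarrow> bool" and B :: "nat \<Rightarrow> 'a set"
  assumes graph: "graph V E" and nice: "nice_blowup_C5 V E B"
begin

lemma irreflp_E: "irreflp E"
  using graph by (simp add: graph_def irreflp_def)

lemma symp_E: "symp E"
  using graph by (simp add: graph_def symp_def)

lemma blob_subset: "B (j mod 5) \<subseteq> V"
  using nice by (simp add: nice_blowup_C5_def)

lemma blob_disjoint:
  assumes "x \<in> B (j mod 5)" "k mod 5 \<noteq> 0"
  shows "x \<notin> B ((j + k) mod 5)"
proof -
  have "(j + k) mod 5 \<noteq> j mod 5" using assms(2) by presburger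
  then have "B (j mod 5) \<inter> B ((j + k) mod 5) = {}"
    using nice unfolding nice_blowup_C5_def by simp
  then show ?thesis using assms(1) by blast
qed

lemma blob_clique:
  assumes "x \<in> B (j mod 5)" "y \<in> B (j mod 5)" "x \<noteq> y"
  shows "E x y"
proof -
  have "is_clique E (B (j mod 5))" using nice by (simp add: nice_blowup_C5_def)
  then show ?thesis using assms by (simp add: is_clique_def)
qed

lemma blob_right_neighbour: "x \<in> B (j mod 5) \<Longrightarrow> \<exists>y\<in>B ((j + 1) mod 5). E x y"
  using nice unfolding nice_blowup_C5_def mod_add_left_eq[symmetric, of j] by simp

lemma blob_anticomplete:
  assumes "x \<in> B (j mod 5)" "y \<in> B ((j + 2) mod 5)"
  shows "\<not> E x y" "\<not> E y x"
proof -
  have "anticomplete E (B (j mod 5)) (B ((j + 2) mod 5))"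
    using nice unfolding nice_blowup_C5_def mod_add_left_eq[symmetric, of j] by simp
  then show "\<not> E x y" using assms by (simp add: anticomplete_def)
  then show "\<not> E y x" using symp_E by (blast dest: sympD)
qed

lemma A2_subset: "A2 V E B i \<subseteq> V"
  by (auto simp: A2_def)

lemma A2_not_in_blob: "v \<in> A2 V E B i \<Longrightarrow> j < 5 \<Longrightarrow> v \<notin> B j"
  by (auto simp: A2_def VH_def)

lemma A2_anticomplete:
  assumes "v \<in> A2 V E B i" "i < 5" "y \<in> B ((i + 2) mod 5) \<union> B ((i + 3) mod 5) \<union> B ((i + 4) mod 5)"
  shows "\<not> E v y"
proof
  assume "E v y"
  obtain k where "k \<in> {2, 3, 4}" "y \<in> B ((i + k) mod 5)"
    using assms(3) by blast
  with \<open>E v y\<close> have "k \<in> {2, 3, 4}" "(i + k) mod 5 \<in> supp E B v"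
    by (auto simp: supp_def)
  moreover have "(i + k) mod 5 \<notin> {i, (i + 1) mod 5}" if "k \<in> {2, 3, 4}" for k
  proof -
    have "i = 0 \<or> i = 1 \<or> i = 2 \<or> i = 3 \<or> i = 4" using assms(2) by arith
    then show ?thesis using that by (elim disjE) auto
  qed
  ultimately show False using assms(1) by (auto simp: A2_def)
qed

lemma A3'_subset: "A3' V E B (j mod 5) \<subseteq> V"
  using blob_subset by (auto simp: A3'_def A3_def)

lemma A3'_not_in_other_blob:
  assumes "v \<in> A3' V E B ((j + 1) mod 5)"
  shows "v \<notin> B ((j + 2) mod 5) \<union> B ((j + 3) mod 5) \<union> B ((j + 4) mod 5) \<union> B (j mod 5)"
proof (cases "v \<in> B ((j + 1) mod 5)")
  case True
  \<comment> \<open>The simplifier would turn j + 1 + 2 into 3 + j, so shifts are rewritten by explicit equations.\<close>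
  have shift: "j + 1 + 1 = j + 2" "j + 1 + 2 = j + 3" "j + 1 + 3 = j + 4"
    "(j + 1 + 4) mod 5 = j mod 5"
    by simp_all
  have k: "(1::nat) mod 5 \<noteq> 0" "(2::nat) mod 5 \<noteq> 0" "(3::nat) mod 5 \<noteq> 0" "(4::nat) mod 5 \<noteq> 0"
    by simp_all
  show ?thesis
    using blob_disjoint[OF True k(1)] blob_disjoint[OF True k(2)] blob_disjoint[OF True k(3)]
      blob_disjoint[OF True k(4)]
    unfolding shift by blast
next
  case False
  then show ?thesis using assms by (auto simp: A3'_def A3_def VH_def)
qed

lemma A3'_right_neighbour:
  assumes "v \<in> A3' V E B ((j + 1) mod 5)"
  shows "\<exists>y\<in>B ((j + 2) mod 5). E v y"
proof (cases "v \<in> B ((j + 1) mod 5)")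
  case True
  have "j + 1 + 1 = j + 2" by simp
  then show ?thesis using blob_right_neighbour[OF True] by simp
next
  case False
  then have "((j + 1) mod 5 + 1) mod 5 \<in> supp E B v" using assms by (simp add: A3'_def A3_def)
  moreover have "((j + 1) mod 5 + 1) mod 5 = (j + 2) mod 5" by presburger
  ultimately show ?thesis unfolding supp_def by auto
qed

lemma A3'_anticomplete:
  assumes "v \<in> A3' V E B ((j + 1) mod 5)" "y \<in> B ((j + 3) mod 5) \<union> B ((j + 4) mod 5)"
  shows "\<not> E v y"
proof (cases "v \<in> B ((j + 1) mod 5)")
  case True
  have shift: "j + 1 + 2 = j + 3" "(j + 4 + 2) mod 5 = (j + 1) mod 5" by presburger+
  have "\<not> E v y" if "y \<in> B ((j + 3) mod 5)"
    using blob_anticomplete(1)[OF True, of y] that unfolding shift by blast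
  moreover have "\<not> E v y" if "y \<in> B ((j + 4) mod 5)"
    using blob_anticomplete(2)[of y "j + 4" v] True that unfolding shift by blast
  ultimately show ?thesis using assms(2) by blast
next
  case False
  define r where "r = (j + 1) mod 5"
  have supp: "supp E B v = {(r + 4) mod 5, r, (r + 1) mod 5}"
    using assms(1) False by (simp add: A3'_def A3_def r_def)
  have shift: "j + 3 = j + 1 + 2" "j + 4 = j + 1 + 3" by simp_all
  obtain k where k: "k \<in> {2, 3}" "y \<in> B ((j + 1 + k) mod 5)"
    using assms(2) unfolding shift by blast
  have "(j + 1 + k) mod 5 = (r + k) mod 5"
    unfolding r_def mod_add_left_eq ..
  moreover have "(r + k) mod 5 \<notin> {(r + 4) mod 5, r, (r + 1) mod 5}"
  proof -
    have "r = 0 \<or> r = 1 \<or> r = 2 \<or> r = 3 \<or> r = 4" unfolding r_def by arith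
    then show ?thesis using k(1) by (elim disjE) auto
  qed
  moreover have "E v y \<Longrightarrow> (j + 1 + k) mod 5 \<in> supp E B v"
    using k(2) by (auto simp: supp_def)
  ultimately show ?thesis unfolding supp by argo
qed

end

locale P7_C4_C6_C7_free_C5_blowup = C5_blowup +
  assumes no_P7: "\<not> has_induced_P V E 7"
    and no_C4: "\<not> has_induced_C V E 4"
    and no_C6: "\<not> has_induced_C V E 6"
    and no_C7: "\<not> has_induced_C V E 7"
begin

lemma induced_path_list_length_less_7:
  "induced_path_list E ys \<Longrightarrow> set ys \<subseteq> V \<Longrightarrow> length ys < 7"
  using has_induced_P_of_induced_path_list[of E ys V 7] no_P7 by force

lemma closable_path_length:
  assumes "induced_path_list E ys" "ys \<noteq> []" "z \<notin> set ys" "set (z # ys) \<subseteq> V"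
    and "\<forall>y\<in>set ys. E z y \<longleftrightarrow> y = hd ys \<or> y = last ys"
  shows "length ys \<noteq> 3" "length ys \<noteq> 5" "length ys \<noteq> 6"
  using has_induced_C_by_closing_path[OF irreflp_E symp_E assms] no_C4 no_C6 no_C7 by auto

lemma induced_P6_end_neighbour:
  assumes "induced_path_list E ys" "length ys = 6" "x \<notin> set ys" "set (x # ys) \<subseteq> V"
    and "E x (ys ! 0)"
  shows "E x (ys ! 1) \<or> E x (ys ! 2) \<or> E x (ys ! 3)"
proof (rule ccontr)
  assume "\<not> ?thesis"
  moreover have "q = 1 \<or> q = 2 \<or> q = 3" if "0 < q" "q < 4" for q :: nat
    using that by arith
  ultimately have "\<forall>q. 0 < q \<longrightarrow> q < 4 \<longrightarrow> \<not> E x (ys ! q)"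
    by blast
  moreover have "ys \<noteq> []" using assms(2) by auto
  moreover from this have "E x (hd ys)" using assms(5) by (simp add: hd_conv_nth)
  ultimately have "induced_path_list E (x # ys) \<or> (\<exists>j. 4 \<le> j \<and> j < 6 \<and> has_induced_C V E (j + 2))"
    using induced_path_list_Cons_or_hole[OF irreflp_E symp_E assms(1) _ assms(3,4)] assms(2) by auto
  moreover have "\<not> induced_path_list E (x # ys)"
    using induced_path_list_length_less_7[of "x # ys"] assms(2,4) by auto
  moreover have "j = 4 \<or> j = 5" if "4 \<le> j" "j < 6" for j :: nat using that by arith
  ultimately show False using no_C6 no_C7 by fastforce
qed

context
  fixes i :: nat and ks :: "'a list" and u v :: 'a
  assumes i: "i < 5" and ks: "set ks \<subseteq> A2 V E B i"
    and u: "u \<in> A3' V E B ((i + 1) mod 5)" and v: "v \<in> A3' V E B ((i + 1) mod 5)"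
    and path: "induced_path_list E (u # ks @ [v])"
begin

private lemma path_subset: "set (u # ks @ [v]) \<subseteq> V"
proof -
  have "u \<in> V" "v \<in> V" using u v A3'_subset[of "i + 1"] by blast+
  then show ?thesis using ks A2_subset by auto
qed

private lemma path_distinct: "distinct (u # ks @ [v])"
  using path by (simp add: induced_path_list_iff)

private lemma path_not_in_blobs:
  "w \<in> set (u # ks @ [v]) \<Longrightarrow> w \<notin> B ((i + 2) mod 5) \<union> B ((i + 3) mod 5) \<union> B ((i + 4) mod 5) \<union> B i"
  using A2_not_in_blob ks A3'_not_in_other_blob[OF u] A3'_not_in_other_blob[OF v] i by fastforce

private lemma interior_anticomplete:
  assumes "k \<in> set ks" "y \<in> B ((i + 2) mod 5) \<union> B ((i + 3) mod 5) \<union> B ((i + 4) mod 5)"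
  shows "\<not> E y k"
  using A2_anticomplete[OF _ i] ks assms symp_E by (auto dest: sympD)

private lemma ends_anticomplete:
  assumes "w \<in> {u, v}" "y \<in> B ((i + 3) mod 5) \<union> B ((i + 4) mod 5)"
  shows "\<not> E y w"
  using A3'_anticomplete u v assms symp_E by (auto dest: sympD)

lemma interior_length_le_1_if_private_neighbours:
  assumes "\<forall>c\<in>B ((i + 2) mod 5). \<not> (E u c \<and> E v c)"
  shows "length ks \<le> 1"
proof -
  obtain a where a: "a \<in> B ((i + 2) mod 5)" "E u a"
    using A3'_right_neighbour[OF u] by blast
  obtain b where b: "b \<in> B ((i + 2) mod 5)" "E v b"
    using A3'_right_neighbour[OF v] by blast
  have "\<not> E a v" "\<not> E b u" using assms a b symp_E by (auto dest: sympD)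
  have "E a b" using blob_clique[OF a(1) b(1)] a(2) \<open>\<not> E b u\<close> symp_E by (auto dest: sympD)
  let ?Q = "a # u # ks @ [v]"
  have "induced_path_list E ?Q"
    using path path_not_in_blobs[of a] a \<open>\<not> E a v\<close> interior_anticomplete[of _ a]
      symp_E path_distinct
    by (subst induced_path_list_Cons[OF irreflp_E symp_E]) (auto dest: sympD)
  moreover have "set ?Q \<subseteq> V" using path_subset a(1) blob_subset by auto
  ultimately have "length ?Q < 7" by (rule induced_path_list_length_less_7)
  moreover have "length ?Q \<noteq> 5" "length ?Q \<noteq> 6"
  proof -
    have "b \<notin> set ?Q"
      using path_not_in_blobs[of b] b(1) \<open>E a b\<close> irreflp_E by (auto simp: irreflp_def)
    moreover have "set (b # ?Q) \<subseteq> V" using \<open>set ?Q \<subseteq> V\<close> b(1) blob_subset by auto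
    moreover have "\<forall>y\<in>set ?Q. E b y \<longleftrightarrow> y = hd ?Q \<or> y = last ?Q"
      using \<open>E a b\<close> b \<open>\<not> E b u\<close> interior_anticomplete[of _ b] path_distinct
        path_not_in_blobs[of a] a(1) symp_E by (auto dest: sympD)
    ultimately show "length ?Q \<noteq> 5" "length ?Q \<noteq> 6"
      using closable_path_length(2,3)[OF \<open>induced_path_list E ?Q\<close>] by simp_all
  qed
  ultimately show ?thesis by simp
qed

lemma interior_length_le_2_if_common_neighbour:
  assumes c: "c \<in> B ((i + 2) mod 5)" "E u c" "E v c"
  shows "length ks \<le> 2"
proof -
  let ?P = "u # ks @ [v]"
  have "c \<notin> set ?P" using path_not_in_blobs c(1) by blast
  moreover have "set (c # ?P) \<subseteq> V" using path_subset c(1) blob_subset by auto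
  moreover have "\<forall>y\<in>set ?P. E c y \<longleftrightarrow> y = hd ?P \<or> y = last ?P"
    using c interior_anticomplete[of _ c] path_distinct symp_E
    by (auto dest: sympD)
  ultimately have "length ?P \<noteq> 5" "length ?P \<noteq> 6"
    using closable_path_length(2,3)[OF path] by auto
  moreover have "length ?P < 7" using induced_path_list_length_less_7[OF path path_subset] .
  ultimately show ?thesis by simp
qed

lemma walk_around_blowup_adjacent:
  assumes c: "c \<in> B ((i + 2) mod 5)" "E c y0"
    and d: "d \<in> B ((i + 3) mod 5)" "E c d"
    and e: "e \<in> B ((i + 4) mod 5)" "E d e"
    and x: "x \<in> B i" "E e x"
    and y: "induced_path_list E [y0, y1, y2]" "y0 \<in> {u, v}" "y1 \<in> set ks" "y2 \<in> set ks"
  shows "E x y0"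
proof -
  have shift: "i + 2 + 1 = i + 3" "i + 2 + 2 = i + 4" "i + 2 + 3 = i + 5" "i + 3 + 1 = i + 4"
    "i + 3 + 2 = i + 5" "i + 4 + 1 = i + 5" "(i + 5) mod 5 = i" "i mod 5 = i"
    using i by simp_all
  have "\<not> E e c" using blob_anticomplete(2)[OF c(1), of e] e(1) unfolding shift by blast
  have "\<not> E x d" using blob_anticomplete(2)[OF d(1), of x] x(1) unfolding shift by blast
  have "\<not> E x c" using blob_anticomplete(1)[of x i, OF _ c(1)] x(1) unfolding shift by blast
  have distinct: "d \<noteq> c" "e \<noteq> c" "e \<noteq> d" "x \<noteq> c" "x \<noteq> d" "x \<noteq> e"
  proof -
    have k: "(1::nat) mod 5 \<noteq> 0" "(2::nat) mod 5 \<noteq> 0" "(3::nat) mod 5 \<noteq> 0" by simp_all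
    show "d \<noteq> c" "e \<noteq> c" "e \<noteq> d" "x \<noteq> c" "x \<noteq> d" "x \<noteq> e"
      using blob_disjoint[OF c(1) k(1)] blob_disjoint[OF c(1) k(2)] blob_disjoint[OF c(1) k(3)]
        blob_disjoint[OF d(1) k(1)] blob_disjoint[OF d(1) k(2)] blob_disjoint[OF e(1) k(1)]
        d(1) e(1) x(1)
      unfolding shift by blast+
  qed
  have y_notin: "y \<notin> B ((i + 2) mod 5) \<union> B ((i + 3) mod 5) \<union> B ((i + 4) mod 5) \<union> B i"
    if "y \<in> {y0, y1, y2}" for y
    using path_not_in_blobs[of y] that y(2-4) by auto
  have "y1 \<noteq> y0" "y2 \<noteq> y0" using y(1) by (auto simp: induced_path_list_iff)
  then have "induced_path_list E [c, y0, y1, y2]"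
    using y c y_notin interior_anticomplete[of _ c]
    by (subst induced_path_list_Cons[OF irreflp_E symp_E]) auto
  then have "induced_path_list E [d, c, y0, y1, y2]"
    using y c(1) d y_notin interior_anticomplete[of _ d] ends_anticomplete[of y0 d] distinct symp_E
    by (subst induced_path_list_Cons[OF irreflp_E symp_E]) (auto dest: sympD)
  then have "induced_path_list E [e, d, c, y0, y1, y2]"
    using y c(1) d e y_notin interior_anticomplete[of _ e] ends_anticomplete[of y0 e] distinct
      symp_E \<open>\<not> E e c\<close>
    by (subst induced_path_list_Cons[OF irreflp_E symp_E]) (auto dest: sympD)
  moreover have "x \<notin> set [e, d, c, y0, y1, y2]" using distinct y_notin x(1) by auto
  moreover have "set (x # [e, d, c, y0, y1, y2]) \<subseteq> V"
    using path_subset blob_subset[of "i + 2"] blob_subset[of "i + 3"] blob_subset[of "i + 4"]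
      blob_subset[of i] c(1) d(1) e(1) x(1) y(2-4) unfolding shift by auto
  moreover have "E x ([e, d, c, y0, y1, y2] ! 0)" using x(2) symp_E by (auto dest: sympD)
  ultimately have "E x d \<or> E x c \<or> E x y0"
    using induced_P6_end_neighbour by fastforce
  then show ?thesis using \<open>\<not> E x d\<close> \<open>\<not> E x c\<close> by blast
qed

lemma interior_length_ne_2_if_common_neighbour:
  assumes c: "c \<in> B ((i + 2) mod 5)" "E u c" "E v c"
  shows "length ks \<noteq> 2"
proof
  assume "length ks = 2"
  then obtain k0 k1 where ks_eq: "ks = [k0, k1]" by (auto simp: numeral_2_eq_2 length_Suc_conv)
  have shift: "i + 2 + 1 = i + 3" "i + 3 + 1 = i + 4" "(i + 4 + 1) mod 5 = i"
    "(i + 2 + 3) mod 5 = i" "i mod 5 = i"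
    using i by simp_all
  obtain d where d: "d \<in> B ((i + 3) mod 5)" "E c d"
    using blob_right_neighbour[OF c(1)] unfolding shift by blast
  obtain e where e: "e \<in> B ((i + 4) mod 5)" "E d e"
    using blob_right_neighbour[OF d(1)] unfolding shift by blast
  obtain x where x: "x \<in> B i" "E e x"
    using blob_right_neighbour[OF e(1)] unfolding shift by blast
  have "E c u" "E c v" using c(2,3) symp_E by (auto dest: sympD)
  have "induced_path_list E [u, k0, k1]"
    using induced_path_list_take[OF path, of 3] ks_eq by simp
  then have "E x u"
    using walk_around_blowup_adjacent[OF c(1) \<open>E c u\<close> d e x] ks_eq by simp
  have "induced_path_list E [v, k1, k0]"
    using induced_path_list_take[of E "rev (u # ks @ [v])" 3]
      induced_path_list_rev[of E "u # ks @ [v]"] path ks_eq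
    by simp
  then have "E x v"
    using walk_around_blowup_adjacent[OF c(1) \<open>E c v\<close> d e x] ks_eq by simp
  have "\<not> E x c" using blob_anticomplete(1)[of x i, OF _ c(1)] x(1) unfolding shift by blast
  have "\<not> E u v"
    using path path_distinct ks_eq by (auto simp: induced_path_list_Cons[OF irreflp_E symp_E])
  have "c \<notin> set (u # ks @ [v])" "x \<notin> set (u # ks @ [v])"
    using path_not_in_blobs c(1) x(1) by blast+
  have "induced_path_list E [v]" using irreflp_E by (simp add: induced_path_list_iff irreflp_def)
  then have "induced_path_list E [u, c, v]"
    using c \<open>\<not> E u v\<close> \<open>c \<notin> set (u # ks @ [v])\<close> path_distinct symp_E
    by (auto simp: induced_path_list_Cons[OF irreflp_E symp_E] dest: sympD)
  moreover have "x \<notin> set [u, c, v]"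
    using \<open>x \<notin> set (u # ks @ [v])\<close> blob_disjoint[OF c(1), of 3] x(1) unfolding shift by auto
  moreover have "set (x # [u, c, v]) \<subseteq> V"
    using path_subset blob_subset[of "i + 2"] blob_subset[of i] c(1) x(1) unfolding shift by auto
  moreover have "\<forall>y\<in>set [u, c, v]. E x y \<longleftrightarrow> y = hd [u, c, v] \<or> y = last [u, c, v]"
    using \<open>E x u\<close> \<open>E x v\<close> \<open>\<not> E x c\<close> \<open>c \<notin> set (u # ks @ [v])\<close> by auto
  ultimately show False using closable_path_length(1) by fastforce
qed

lemma interior_length_le_1: "length ks \<le> 1"
proof (cases "\<exists>c\<in>B ((i + 2) mod 5). E u c \<and> E v c")
  case True
  then show ?thesis
    using interior_length_le_2_if_common_neighbour interior_length_ne_2_if_common_neighbour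
    by fastforce
next
  case False
  then show ?thesis using interior_length_le_1_if_private_neighbours by blast
qed

end

end

theorem lemma7p2:
  fixes V :: "'a set" and E :: "'a \<Rightarrow> 'a \<Rightarrow> bool" and B :: "nat \<Rightarrow> 'a set"
    and i :: nat and K :: "'a set" and u v :: 'a
  assumes "graph V E"
    and "\<not> has_induced_P V E 7" and "\<not> has_induced_C V E 4"
    and "\<not> has_induced_C V E 6" and "\<not> has_induced_C V E 7"
    and "nice_blowup_C5 V E B"
    and "i < 5"
    and "K \<subseteq> A2 V E B i" and "connected_set E K"
    and "u \<in> nbhd V E K \<inter> A3' V E B ((i + 1) mod 5)"
    and "v \<in> nbhd V E K \<inter> A3' V E B ((i + 1) mod 5)"
    and "u \<noteq> v" and "\<not> E u v"
  shows "\<exists>w\<in>K. E u w \<and> E v w"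
proof -
  interpret P7_C4_C6_C7_free_C5_blowup V E B
    using assms(1-6) by unfold_locales
  obtain ku kv where ku: "ku \<in> K" "E u ku" and kv: "kv \<in> K" "E v kv" and "u \<notin> K" "v \<notin> K"
    using assms(10,11) by (auto simp: nbhd_def)
  then have "(\<lambda>a b. a \<in> K \<and> b \<in> K \<and> E a b)\<^sup>*\<^sup>* ku kv"
    using assms(9) by (simp add: connected_set_def)
  then obtain ks where ks: "ks \<noteq> []" "set ks \<subseteq> K" "induced_path_list E (u # ks @ [v])"
    using induced_path_list_through_connected[OF irreflp_E symp_E _ ku(1) kv(1) ku(2) kv(2)]
      \<open>u \<notin> K\<close> \<open>v \<notin> K\<close> assms(12,13) by blast
  have "length ks \<le> 1"
    using interior_length_le_1[OF assms(7) _ _ _ ks(3)] ks(2) assms(8,10,11) by blast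
  then obtain w where "ks = [w]" using ks(1) by (cases ks) auto
  then have "w \<in> K" "E u w" "E w v"
    using ks(2,3) by (auto simp: induced_path_list_Cons[OF irreflp_E symp_E])
  then show ?thesis using symp_E by (auto dest: sympD)
qed

end
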